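(* Let $n,m\ge1$, $p_{n,m}$ stable of degree $n$ in $z$ and $m$ in $w$, and $0\le k\le m-1$. Then $a_k$ satisfies: (a) $a_k\in\operatorname{span}\{z^iw^j:0\le i\le 2n,\ 0\le j\le m-1\}$; (b) in $L^2\!\left(\frac{d\sigma}{|p_{n,m}|^2}\right)$, $a_k$ is orthogonal to all $z^iw^j$ with $0\le i\le 2n$, $0\le j\le m-1$, $j\ne k$, and to all $z^iw^k$ with $0\le i\le 2n$, $i\ne n$; (c) $\|a_k\|^2=\int_{-\pi}^{\pi}T_{k,k}(e^{i\theta})\,\frac{d\theta}{2\pi}$, the norm taken in $L^2\!\left(\frac{d\sigma}{|p_{n,m}|^2}\right)$. Moreover, any polynomial $f$ satisfying (a), (b), (c) (with $f$ in place of $a_k$) is of the form $f=c\,a_k$ with $|c|=1$.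
   Context: $\sigma$ is normalized Lebesgue measure on $\mathbb{T}^2$; $p_{n,m}$ is stable if it has no zeros in $\{|z|\le1,|w|\le1\}$. Write $p_{n,m}(z,w)=\sum_{i=0}^m p_i(z)w^i$ and $\bar p_i(z)=\overline{p_i(\bar z)}$. Set $\tilde p_{n,m}(z,w)=z^nw^m\overline{p_{n,m}(1/\bar z,1/\bar w)}$, $L(z,w;\eta)=z^n\frac{p_{n,m}(z,w)\overline{p_{n,m}(1/\bar z,\eta)}-\tilde p_{n,m}(z,w)\overline{\tilde p_{n,m}(1/\bar z,\eta)}}{1-w\bar\eta}$ (a polynomial in $z,w,\bar\eta$), and define $a_j$ by $L=\sum_{j=0}^{m-1}a_j(z,w)\bar\eta^j$. $T_m(z)$ is the $m\times m$ matrix (rows and columns indexed $0,\dots,m-1$) $T_m(z)=M_1M_2-M_3M_4$, where $M_1$ is lower triangular with $(r,s)$ entry $p_{r-s}(z)$ for $r\ge s$; $M_2$ is upper triangular with $(r,s)$ entry $\bar p_{s-r}(1/z)$ for $s\ge r$; $M_3$ is lower triangular with $(r,s)$ entry $\bar p_{m-r+s}(1/z)$ for $r\ge s$; $M_4$ is upper triangular with $(r,s)$ entry $p_{m-s+r}(z)$ for $s\ge r$. $T_{k,k}$ denotes its $(k,k)$ entry. *)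

theory Defs
  imports "HOL-Analysis.Analysis"
begin

definition peval :: "(nat \<Rightarrow> nat \<Rightarrow> complex) \<Rightarrow> nat \<Rightarrow> nat \<Rightarrow> complex \<Rightarrow> complex \<Rightarrow> complex" where
  "peval P n m z w = (\<Sum>i\<le>n. \<Sum>j\<le>m. P i j * z ^ i * w ^ j)"

definition has_bidegree :: "(nat \<Rightarrow> nat \<Rightarrow> complex) \<Rightarrow> nat \<Rightarrow> nat \<Rightarrow> bool" where
  "has_bidegree P n m \<longleftrightarrow> (\<forall>i j. (n < i \<or> m < j) \<longrightarrow> P i j = 0)
      \<and> (\<exists>j. P n j \<noteq> 0) \<and> (\<exists>i. P i m \<noteq> 0)"

definition stable :: "(nat \<Rightarrow> nat \<Rightarrow> complex) \<Rightarrow> nat \<Rightarrow> nat \<Rightarrow> bool" where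
  "stable P n m \<longleftrightarrow> (\<forall>z w. cmod z \<le> 1 \<longrightarrow> cmod w \<le> 1 \<longrightarrow> peval P n m z w \<noteq> 0)"

text \<open>p_i(z) (coefficient of w^i) and pbar_i(z) = conj (p_i (conj z)).\<close>
definition pcoef :: "(nat \<Rightarrow> nat \<Rightarrow> complex) \<Rightarrow> nat \<Rightarrow> nat \<Rightarrow> complex \<Rightarrow> complex" where
  "pcoef P n i z = (\<Sum>l\<le>n. P l i * z ^ l)"

definition pbar :: "(nat \<Rightarrow> nat \<Rightarrow> complex) \<Rightarrow> nat \<Rightarrow> nat \<Rightarrow> complex \<Rightarrow> complex" where
  "pbar P n i z = (\<Sum>l\<le>n. cnj (P l i) * z ^ l)"

text \<open>Reflected polynomial z^n w^m conj(p(1/conj z, 1/conj w)), written as the polynomial it is.\<close>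
definition ptilde :: "(nat \<Rightarrow> nat \<Rightarrow> complex) \<Rightarrow> nat \<Rightarrow> nat \<Rightarrow> complex \<Rightarrow> complex \<Rightarrow> complex" where
  "ptilde P n m z w = (\<Sum>i\<le>n. \<Sum>j\<le>m. cnj (P i j) * z ^ (n - i) * w ^ (m - j))"

text \<open>The kernel L(z,w;eta), for z \<noteq> 0 and w conj(eta) \<noteq> 1.\<close>
definition Lker :: "(nat \<Rightarrow> nat \<Rightarrow> complex) \<Rightarrow> nat \<Rightarrow> nat \<Rightarrow> complex \<Rightarrow> complex \<Rightarrow> complex \<Rightarrow> complex" where
  "Lker P n m z w \<eta> = z ^ n *
     (peval P n m z w * cnj (peval P n m (1 / cnj z) \<eta>)
      - ptilde P n m z w * cnj (ptilde P n m (1 / cnj z) \<eta>)) / (1 - w * cnj \<eta>)"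

definition is_bipoly :: "(complex \<Rightarrow> complex \<Rightarrow> complex) \<Rightarrow> bool" where
  "is_bipoly f \<longleftrightarrow> (\<exists>C N. \<forall>z w. f z w = (\<Sum>i\<le>N. \<Sum>j\<le>N. C i j * z ^ i * w ^ j))"

definition in_span_box :: "nat \<Rightarrow> nat \<Rightarrow> (complex \<Rightarrow> complex \<Rightarrow> complex) \<Rightarrow> bool" where
  "in_span_box n m f \<longleftrightarrow> (\<exists>C. \<forall>z w. f z w = (\<Sum>i\<le>2*n. \<Sum>j<m. C i j * z ^ i * w ^ j))"

text \<open>Inner product of L^2(d\<sigma>/|p|^2) on the torus, \<sigma> normalized Lebesgue measure.\<close>
definition wip :: "(nat \<Rightarrow> nat \<Rightarrow> complex) \<Rightarrow> nat \<Rightarrow> nat \<Rightarrow> (complex \<Rightarrow> complex \<Rightarrow> complex)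
    \<Rightarrow> (complex \<Rightarrow> complex \<Rightarrow> complex) \<Rightarrow> complex" where
  "wip P n m f g = integral (cbox (-pi, -pi) (pi, pi))
      (\<lambda>x::real \<times> real. f (cis (fst x)) (cis (snd x)) * cnj (g (cis (fst x)) (cis (snd x)))
          / of_real ((cmod (peval P n m (cis (fst x)) (cis (snd x)))) ^ 2)) / of_real (4 * pi ^ 2)"

definition monom2 :: "nat \<Rightarrow> nat \<Rightarrow> complex \<Rightarrow> complex \<Rightarrow> complex" where
  "monom2 i j = (\<lambda>z w. z ^ i * w ^ j)"

text \<open>Entry (r,s) of T_m(z) = M1 M2 - M3 M4 (indices 0..m-1).\<close>
definition Tent :: "(nat \<Rightarrow> nat \<Rightarrow> complex) \<Rightarrow> nat \<Rightarrow> nat \<Rightarrow> complex \<Rightarrow> nat \<Rightarrow> nat \<Rightarrow> complex" where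
  "Tent P n m z r s = (\<Sum>t<m.
      (if t \<le> r then pcoef P n (r - t) z else 0) * (if t \<le> s then pbar P n (s - t) (1 / z) else 0)
    - (if t \<le> r then pbar P n (m - r + t) (1 / z) else 0) * (if t \<le> s then pcoef P n (m - s + t) z else 0))"

end

theory Submission
  imports Defs "HOL-Complex_Analysis.Cauchy_Integral_Theorem"
begin

(* Write p(z,w) = \<Sum>_i p_i(z) w^i, p*_t(z) = z^n conj(p_t(1/conj z)) and let p~ be the reflection
   of p.  The proof has three ingredients, developed in this order.
   1. Explicit coefficients.  The kernel numerator, expanded in powers of conj \<eta>, has
      coefficients B_t(z,w) = p(z,w) p*_t(z) - p~(z,w) p_{m-t}(z).  Dividing by 1 - w conj \<eta>
      by telescoping (the remainder vanishes because \<Sum>_t w^(m-t) B_t = 0, an antisymmetry of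
      the cross terms) gives polynomials A_c = \<Sum>_{t\<le>c} w^(c-t) B_t with L = \<Sum>_{c<m} A_c conj \<eta>^c;
      hence a_c = A_c.  The same antisymmetry cancels the terms of w-degree \<ge> m: this is (a).
   2. Analysis on the circle.  For z on the circle, p(z,\<cdot>) has no zeros in the closed disc, so
      by Cauchy's theorem \<integral> w^s / p(z,w) = 0 for s \<ge> 1.  Since \<Sum>_t p_t(z) w^t = p(z,w), this
      turns the integral of A_k conj(z^i w^j) / |p|^2 into \<delta>_{(i,j),(n,k)}: A_k is the
      reproducing vector of z^n w^k in the box with the weighted inner product.  This is (b).
   3. Linear algebra in the box.  The weighted inner product is definite on box polynomials
      (their coefficients are Fourier coefficients).  So a reproducing vector has squared norm
      equal to its own (n,k) coefficient, which for A_k is the mean of T_kk: this is (c);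
      and any f with the orthogonality relations is c A_k, with |c| = 1 by the norm condition. *)

section \<open>Explicit coefficients of the kernel\<close>

text \<open>The reflected coefficient p*_t(z) = z^n conj(p_t(1/conj z)), written as a polynomial.\<close>
definition refl_coef :: "(nat \<Rightarrow> nat \<Rightarrow> complex) \<Rightarrow> nat \<Rightarrow> nat \<Rightarrow> complex \<Rightarrow> complex" where
  "refl_coef P n t z = (\<Sum>l\<le>n. cnj (P l t) * z ^ (n - l))"

text \<open>The coefficient of w^i conj(\<eta>)^t in the kernel numerator.\<close>
definition cross_coef :: "(nat \<Rightarrow> nat \<Rightarrow> complex) \<Rightarrow> nat \<Rightarrow> nat \<Rightarrow> nat \<Rightarrow> nat \<Rightarrow> complex \<Rightarrow> complex" where
  "cross_coef P n m i t z = pcoef P n i z * refl_coef P n t z - refl_coef P n (m - i) z * pcoef P n (m - t) z"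

text \<open>B_t(z,w): the coefficient of conj(\<eta>)^t in the kernel numerator.\<close>
definition numer_coef :: "(nat \<Rightarrow> nat \<Rightarrow> complex) \<Rightarrow> nat \<Rightarrow> nat \<Rightarrow> nat \<Rightarrow> complex \<Rightarrow> complex \<Rightarrow> complex" where
  "numer_coef P n m t z w = (\<Sum>i\<le>m. w ^ i * cross_coef P n m i t z)"

text \<open>A_c(z,w): the coefficient of conj(\<eta>)^c in the kernel L itself.\<close>
definition kernel_coef :: "(nat \<Rightarrow> nat \<Rightarrow> complex) \<Rightarrow> nat \<Rightarrow> nat \<Rightarrow> nat \<Rightarrow> complex \<Rightarrow> complex \<Rightarrow> complex" where
  "kernel_coef P n m c z w = (\<Sum>t\<le>c. w ^ (c - t) * numer_coef P n m t z w)"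

lemma sum_involution_zero:
  fixes g :: "'a \<Rightarrow> 'b::real_vector"
  assumes "finite D" "\<And>x. x \<in> D \<Longrightarrow> s x \<in> D" "\<And>x. x \<in> D \<Longrightarrow> s (s x) = x"
    "\<And>x. x \<in> D \<Longrightarrow> g (s x) = - g x"
  shows "sum g D = 0"
proof -
  have "sum g D = sum (\<lambda>x. g (s x)) D"
    by (rule sum.reindex_bij_witness[where i=s and j=s]) (use assms in auto)
  also have "\<dots> = - sum g D" using assms(4) by (simp add: sum_negf)
  finally show ?thesis by (simp add: eq_neg_iff_add_eq_0 scaleR_2[symmetric])
qed

lemma sum_rev_atMost: "(\<Sum>i\<le>m. f (m - i)) = (\<Sum>i\<le>(m::nat). f i)"
  by (rule sum.reindex_bij_witness[where i="\<lambda>i. m-i" and j="\<lambda>i. m-i"]) auto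

text \<open>The antisymmetry behind all cancellations: (i,t) \<mapsto> (m-t, m-i) negates cross terms.\<close>
lemma cross_coef_antisym: "i \<le> m \<Longrightarrow> t \<le> m \<Longrightarrow> cross_coef P n m (m - t) (m - i) z = - cross_coef P n m i t z"
  unfolding cross_coef_def by (simp add: algebra_simps)

lemma kernel_coef_Suc:
  "kernel_coef P n m (Suc c) z w = w * kernel_coef P n m c z w + numer_coef P n m (Suc c) z w"
proof -
  have "(\<Sum>t\<le>c. w ^ (Suc c - t) * numer_coef P n m t z w) = w * kernel_coef P n m c z w"
    unfolding kernel_coef_def sum_distrib_left
    by (rule sum.cong) (auto simp: Suc_diff_le mult.assoc)
  then show ?thesis unfolding kernel_coef_def by simp
qed

text \<open>Division by 1 - w e, as a telescoping identity.\<close>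
lemma kernel_coef_telescope: "(1 - w * e) * (\<Sum>c\<le>M. e ^ c * kernel_coef P n m c z w)
   = (\<Sum>t\<le>M. e ^ t * numer_coef P n m t z w) - e ^ Suc M * w * kernel_coef P n m M z w"
proof (induction M)
  case 0 then show ?case by (simp add: kernel_coef_def algebra_simps)
next
  case (Suc M)
  show ?case
    by (simp add: distrib_left Suc.IH kernel_coef_Suc) (simp add: algebra_simps)
qed

text \<open>\<Sum>_t w^(m-t) B_t = 0: the cross terms cancel in pairs under the antisymmetry.\<close>
lemma numer_coef_weighted_sum_zero: "(\<Sum>t\<le>m. w ^ (m - t) * numer_coef P n m t z w) = 0"
proof -
  have "(\<Sum>t\<le>m. w ^ (m - t) * numer_coef P n m t z w) =
      (\<Sum>(t,i)\<in>{..m}\<times>{..m}. w ^ (i + (m - t)) * cross_coef P n m i t z)"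
    unfolding numer_coef_def sum_distrib_left sum.cartesian_product[symmetric]
    by (intro sum.cong refl) (simp only: power_add mult_ac)
  also have "\<dots> = 0"
  proof (rule sum_involution_zero[where s="\<lambda>(t,i). (m - i, m - t)"])
    fix x assume "x \<in> {..m}\<times>{..m}"
    then obtain t i where x: "x = (t,i)" "t \<le> m" "i \<le> m" by auto
    have "m - t + (m - (m - i)) = i + (m - t)" using x by simp
    then show "(\<lambda>(t,i). w ^ (i + (m - t)) * cross_coef P n m i t z) ((\<lambda>(t,i). (m - i, m - t)) x) =
       - (\<lambda>(t,i). w ^ (i + (m - t)) * cross_coef P n m i t z) x"
      using x by (simp add: cross_coef_antisym)
  qed auto
  finally show ?thesis .
qed

text \<open>Consequently the telescoping remainder at M = m - 1 is the top coefficient B_m.\<close>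
lemma kernel_coef_last: assumes "1 \<le> m"
  shows "w * kernel_coef P n m (m - 1) z w = - numer_coef P n m m z w"
proof -
  have "w * kernel_coef P n m (m - 1) z w = (\<Sum>t\<le>m - 1. w ^ (m - t) * numer_coef P n m t z w)"
    unfolding kernel_coef_def sum_distrib_left
  proof (intro sum.cong refl)
    fix t assume "t \<in> {..m-1}"
    then have "m - t = Suc (m - 1 - t)" using assms by auto
    then show "w * (w ^ (m - 1 - t) * numer_coef P n m t z w) = w ^ (m - t) * numer_coef P n m t z w"
      by simp
  qed
  moreover have "(\<Sum>t\<le>m. w ^ (m - t) * numer_coef P n m t z w)
      = (\<Sum>t\<le>m - 1. w ^ (m - t) * numer_coef P n m t z w) + numer_coef P n m m z w"
    using assms by (cases m) auto
  ultimately show ?thesis using numer_coef_weighted_sum_zero[of w m P n z] by (simp add: eq_neg_iff_add_eq_0)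
qed

lemma peval_by_w_powers: "peval P n m z w = (\<Sum>i\<le>m. pcoef P n i z * w ^ i)"
  unfolding peval_def pcoef_def sum_distrib_right
  by (subst sum.swap) simp

lemma ptilde_by_w_powers: "ptilde P n m z w = (\<Sum>j\<le>m. refl_coef P n j z * w ^ (m - j))"
  unfolding ptilde_def refl_coef_def sum_distrib_right
  by (subst sum.swap) simp

lemma zpow_times_inverse_pow: "(z::'a::field) \<noteq> 0 \<Longrightarrow> l \<le> n \<Longrightarrow> z ^ n * (1 / z) ^ l = z ^ (n - l)"
  by (simp add: power_diff power_one_over)

lemma peval_reflected: assumes "z \<noteq> 0"
  shows "z ^ n * cnj (peval P n m (1 / cnj z) \<eta>) = (\<Sum>t\<le>m. refl_coef P n t z * cnj \<eta> ^ t)"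
proof -
  have "z ^ n * cnj (peval P n m (1 / cnj z) \<eta>)
      = (\<Sum>i\<le>n. \<Sum>j\<le>m. cnj (P i j) * (z ^ n * (1 / z) ^ i) * cnj \<eta> ^ j)"
    unfolding peval_def by (simp add: sum_distrib_left mult_ac)
  also have "\<dots> = (\<Sum>i\<le>n. \<Sum>j\<le>m. cnj (P i j) * z ^ (n - i) * cnj \<eta> ^ j)"
    using assms by (intro sum.cong refl) (simp add: zpow_times_inverse_pow)
  also have "\<dots> = (\<Sum>t\<le>m. refl_coef P n t z * cnj \<eta> ^ t)"
    unfolding refl_coef_def sum_distrib_right by (subst sum.swap) simp
  finally show ?thesis .
qed

lemma ptilde_reflected: assumes "z \<noteq> 0"
  shows "z ^ n * cnj (ptilde P n m (1 / cnj z) \<eta>) = (\<Sum>t\<le>m. cnj \<eta> ^ t * pcoef P n (m - t) z)"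
proof -
  have "z ^ n * cnj (ptilde P n m (1 / cnj z) \<eta>)
      = (\<Sum>i\<le>n. \<Sum>j\<le>m. P i j * (z ^ n * (1 / z) ^ (n - i)) * cnj \<eta> ^ (m - j))"
    unfolding ptilde_def by (simp add: sum_distrib_left mult_ac)
  also have "\<dots> = (\<Sum>i\<le>n. \<Sum>j\<le>m. P i j * z ^ i * cnj \<eta> ^ (m - j))"
    using assms by (intro sum.cong refl) (simp add: zpow_times_inverse_pow)
  also have "\<dots> = (\<Sum>t\<le>m. pcoef P n t z * cnj \<eta> ^ (m - t))"
    unfolding pcoef_def sum_distrib_right by (subst sum.swap) simp
  also have "\<dots> = (\<Sum>t\<le>m. cnj \<eta> ^ t * pcoef P n (m - t) z)"
    by (subst sum_rev_atMost[symmetric]) (simp add: mult.commute)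
  finally show ?thesis .
qed

lemma numer_coef_alt:
  "numer_coef P n m t z w = peval P n m z w * refl_coef P n t z - ptilde P n m z w * pcoef P n (m - t) z"
proof -
  have r: "(\<Sum>i\<le>m. w ^ i * refl_coef P n (m - i) z) = ptilde P n m z w"
    unfolding ptilde_by_w_powers by (subst sum_rev_atMost[symmetric]) (simp add: mult.commute)
  have "numer_coef P n m t z w = (\<Sum>i\<le>m. pcoef P n i z * w ^ i) * refl_coef P n t z
      - (\<Sum>i\<le>m. w ^ i * refl_coef P n (m - i) z) * pcoef P n (m - t) z"
    unfolding numer_coef_def cross_coef_def sum_distrib_right right_diff_distrib sum_subtractf
    by (simp add: mult_ac)
  then show ?thesis unfolding peval_by_w_powers r .
qed

lemma kernel_numerator_expansion: assumes "z \<noteq> 0"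
  shows "z ^ n * (peval P n m z w * cnj (peval P n m (1 / cnj z) \<eta>)
      - ptilde P n m z w * cnj (ptilde P n m (1 / cnj z) \<eta>))
    = (\<Sum>t\<le>m. cnj \<eta> ^ t * numer_coef P n m t z w)"
proof -
  have "z ^ n * (peval P n m z w * cnj (peval P n m (1 / cnj z) \<eta>)
      - ptilde P n m z w * cnj (ptilde P n m (1 / cnj z) \<eta>))
     = peval P n m z w * (z ^ n * cnj (peval P n m (1 / cnj z) \<eta>))
      - ptilde P n m z w * (z ^ n * cnj (ptilde P n m (1 / cnj z) \<eta>))"
    by (simp add: algebra_simps)
  also have "\<dots> = (\<Sum>t\<le>m. cnj \<eta> ^ t * numer_coef P n m t z w)"
    unfolding peval_reflected[OF assms] ptilde_reflected[OF assms] numer_coef_alt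
    by (simp add: sum_distrib_left right_diff_distrib sum_subtractf mult_ac)
  finally show ?thesis .
qed

lemma Lker_expansion: assumes "z \<noteq> 0" "w * cnj \<eta> \<noteq> 1" "1 \<le> m"
  shows "Lker P n m z w \<eta> = (\<Sum>c<m. kernel_coef P n m c z w * cnj \<eta> ^ c)"
proof -
  have lt: "{..<m} = {..m-1}" using assms(3) by auto
  have "(\<Sum>t\<le>m. cnj \<eta> ^ t * numer_coef P n m t z w)
      = (\<Sum>t\<le>m-1. cnj \<eta> ^ t * numer_coef P n m t z w) + cnj \<eta> ^ m * numer_coef P n m m z w"
    using assms(3) by (cases m) auto
  also have "\<dots> = (1 - w * cnj \<eta>) * (\<Sum>c\<le>m-1. cnj \<eta> ^ c * kernel_coef P n m c z w)"
    unfolding kernel_coef_telescope using kernel_coef_last[OF assms(3)] assms(3)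
    by (simp add: mult.assoc)
  finally have eq: "(\<Sum>t\<le>m. cnj \<eta> ^ t * numer_coef P n m t z w)
      = (1 - w * cnj \<eta>) * (\<Sum>c\<le>m-1. cnj \<eta> ^ c * kernel_coef P n m c z w)" .
  have "1 - w * cnj \<eta> \<noteq> 0" using assms(2) by simp
  then show ?thesis
    unfolding Lker_def kernel_numerator_expansion[OF assms(1)] eq lt by (simp add: mult.commute)
qed

lemma poly_coeffs_zero_off_point:
  fixes d :: "nat \<Rightarrow> complex" and w :: complex
  assumes "\<And>e. w * e \<noteq> 1 \<Longrightarrow> (\<Sum>c\<le>N. d c * e ^ c) = 0"
  shows "\<forall>c\<le>N. d c = 0"
proof (rule ccontr)
  assume "\<not> (\<forall>c\<le>N. d c = 0)"
  then have "finite {e. (\<Sum>c\<le>N. d c * e ^ c) = 0}" using polyfun_finite_roots by blast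
  moreover have "UNIV \<subseteq> {e. (\<Sum>c\<le>N. d c * e ^ c) = 0} \<union> {1 / w}"
  proof
    fix e :: complex
    show "e \<in> {e. (\<Sum>c\<le>N. d c * e ^ c) = 0} \<union> {1 / w}"
    proof (cases "w * e = 1")
      case True then have "e = 1 / w"
        by (metis mult_eq_0_iff nonzero_eq_divide_eq one_neq_zero mult.commute)
      then show ?thesis by simp
    qed (use assms in simp)
  qed
  ultimately have "finite (UNIV :: complex set)" by (meson finite_Un finite.emptyI finite.insertI finite_subset)
  then show False by (simp add: infinite_UNIV_char_0)
qed

lemma bipoly_isCont: "is_bipoly f \<Longrightarrow> isCont (\<lambda>z. f z w) z0"
  unfolding is_bipoly_def by (elim exE) (simp add: continuous_intros)

text \<open>Any polynomial coefficients of L in conj \<eta> are the A_c: first for z \<noteq> 0 by uniqueness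
  of polynomial coefficients, then at z = 0 by continuity.\<close>
lemma coeffs_are_kernel_coef:
  assumes m: "1 \<le> m"
    and a_poly: "\<And>j. j < m \<Longrightarrow> is_bipoly (a j)"
    and a_def: "\<And>z w \<eta>. z \<noteq> 0 \<Longrightarrow> w * cnj \<eta> \<noteq> 1 \<Longrightarrow>
                   Lker P n m z w \<eta> = (\<Sum>j<m. a j z w * cnj \<eta> ^ j)"
    and c: "c < m"
  shows "a c = kernel_coef P n m c"
proof -
  have lt: "{..<m} = {..m-1}" using m by auto
  have off0: "a c z w = kernel_coef P n m c z w" if z: "z \<noteq> 0" for z w
  proof -
    have "\<forall>j\<le>m-1. a j z w - kernel_coef P n m j z w = 0"
    proof (rule poly_coeffs_zero_off_point[where w=w])
      fix e assume "w * e \<noteq> 1"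
      then have e: "w * cnj (cnj e) \<noteq> 1" by simp
      have "(\<Sum>j\<le>m-1. (a j z w - kernel_coef P n m j z w) * e ^ j)
          = (\<Sum>j<m. a j z w * cnj (cnj e) ^ j) - (\<Sum>j<m. kernel_coef P n m j z w * cnj (cnj e) ^ j)"
        unfolding lt by (simp add: left_diff_distrib sum_subtractf)
      also have "\<dots> = 0" using a_def[OF z e] Lker_expansion[OF z e m] by simp
      finally show "(\<Sum>j\<le>m-1. (a j z w - kernel_coef P n m j z w) * e ^ j) = 0" .
    qed
    then show ?thesis using c by auto
  qed
  have at0: "a c 0 w = kernel_coef P n m c 0 w" for w
  proof -
    define h where "h = (\<lambda>z. a c z w - kernel_coef P n m c z w)"
    have "isCont h 0" unfolding h_def kernel_coef_def numer_coef_def cross_coef_def pcoef_def refl_coef_def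
      by (intro continuous_intros bipoly_isCont a_poly c)
    then have "(h \<longlongrightarrow> h 0) (at 0)" by (simp add: isCont_def)
    moreover have "(h \<longlongrightarrow> 0) (at 0)"
      by (rule Lim_transform_eventually[OF tendsto_const])
         (auto simp: eventually_at_filter h_def off0 intro!: always_eventually)
    ultimately have "h 0 = 0" by (rule tendsto_unique[OF at_neq_bot])
    then show ?thesis unfolding h_def by simp
  qed
  show ?thesis by (intro ext) (metis off0 at0)
qed


section \<open>(a) The coefficients lie in the box span\<close>

lemma box_monom: assumes "i \<le> 2*n" "j < m" shows "in_span_box n m (\<lambda>z w. c * z ^ i * w ^ j)"
  unfolding in_span_box_def
proof (intro exI allI)
  fix z w :: complex
  let ?C = "\<lambda>i' j'. if i' = i then if j' = j then c else 0 else 0"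
  have "(\<Sum>j'<m. ?C i j' * z ^ i * w ^ j') = c * z ^ i * w ^ j"
    using assms by (simp add: if_distrib if_distribR sum.delta cong: if_cong)
  then have "(\<Sum>i'\<le>2*n. \<Sum>j'<m. ?C i' j' * z ^ i' * w ^ j')
      = (\<Sum>i'\<le>2*n. if i' = i then c * z ^ i * w ^ j else 0)"
    by (intro sum.cong refl) auto
  also have "\<dots> = c * z ^ i * w ^ j" using assms by simp
  finally show "c * z ^ i * w ^ j = (\<Sum>i'\<le>2*n. \<Sum>j'<m. ?C i' j' * z ^ i' * w ^ j')" by simp
qed

lemma box_zero: "in_span_box n m (\<lambda>z w. 0)"
  unfolding in_span_box_def by (rule exI[where x="\<lambda>i j. 0"]) simp

lemma box_add: "in_span_box n m f \<Longrightarrow> in_span_box n m g \<Longrightarrow> in_span_box n m (\<lambda>z w. f z w + g z w)"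
  unfolding in_span_box_def
  by (elim exE, rule_tac x="\<lambda>i j. C i j + Ca i j" in exI) (simp add: distrib_right sum.distrib)

lemma box_smult: "in_span_box n m f \<Longrightarrow> in_span_box n m (\<lambda>z w. c * f z w)"
  unfolding in_span_box_def
  by (elim exE, rule_tac x="\<lambda>i j. c * C i j" in exI) (simp add: sum_distrib_left mult_ac)

lemma box_diff: "in_span_box n m f \<Longrightarrow> in_span_box n m g \<Longrightarrow> in_span_box n m (\<lambda>z w. f z w - g z w)"
  using box_add[of n m f "\<lambda>z w. (-1) * g z w"] box_smult[of n m g "-1"] by simp

lemma box_sum: "finite S \<Longrightarrow> (\<And>x. x \<in> S \<Longrightarrow> in_span_box n m (f x))
    \<Longrightarrow> in_span_box n m (\<lambda>z w. \<Sum>x\<in>S. f x z w)"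
proof (induction S rule: finite_induct)
  case empty
  then show ?case using box_zero by simp
next
  case (insert x F)
  then show ?case using box_add[of n m "f x" "\<lambda>z w. \<Sum>x\<in>F. f x z w"] by simp
qed

text \<open>Each w^e X(z) with e < m and X a cross term is in the box: X has z-degree at most 2n.\<close>
lemma box_cross_coef: assumes "e < m" shows "in_span_box n m (\<lambda>z w. w ^ e * cross_coef P n m i t z)"
proof -
  have pp: "pcoef P n a z * refl_coef P n b z
      = (\<Sum>l\<le>n. \<Sum>l'\<le>n. (P l a * cnj (P l' b)) * z ^ (l + (n - l')))" for a b z
    unfolding pcoef_def refl_coef_def sum_product by (intro sum.cong refl) (simp only: power_add mult_ac)
  have box_pp: "in_span_box n m (\<lambda>z w. w ^ e * (pcoef P n a z * refl_coef P n b z))" for a b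
  proof -
    have "in_span_box n m (\<lambda>z w. \<Sum>l\<le>n. \<Sum>l'\<le>n. (P l a * cnj (P l' b)) * z ^ (l + (n - l')) * w ^ e)"
      by (intro box_sum box_monom finite_atMost) (use assms in auto)
    then show ?thesis unfolding pp by (simp add: sum_distrib_left sum_distrib_right mult_ac)
  qed
  have "in_span_box n m (\<lambda>z w. w ^ e * (pcoef P n i z * refl_coef P n t z)
      - w ^ e * (pcoef P n (m - t) z * refl_coef P n (m - i) z))"
    by (intro box_diff box_pp)
  then show ?thesis unfolding cross_coef_def by (simp add: algebra_simps)
qed

lemma kernel_coef_pairs:
  "kernel_coef P n m k z w = (\<Sum>(t,i)\<in>{..k}\<times>{..m}. w ^ (i + (k - t)) * cross_coef P n m i t z)"
  unfolding kernel_coef_def numer_coef_def sum_distrib_left sum.cartesian_product[symmetric]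
  by (intro sum.cong refl) (simp only: power_add mult_ac)

text \<open>Part (a): the terms of A_k of w-degree \<ge> m cancel in pairs under the antisymmetry.\<close>
lemma kernel_coef_in_box: assumes "k < m" shows "in_span_box n m (kernel_coef P n m k)"
proof -
  define A where "A = {..k}\<times>{..m}"
  define B where "B = {(t,i). i + (k - t) < m}"
  define g where "g = (\<lambda>z w (t,i). w ^ (i + (k - t)) * cross_coef P n m i t z)"
  have fA: "finite A" unfolding A_def by simp
  have high_zero: "sum (g z w) (A - B) = 0" for z w
  proof (rule sum_involution_zero[where s="\<lambda>(t,i). (m - i, m - t)"])
    fix x assume "x \<in> A - B"
    then obtain t i where x: "x = (t,i)" "t \<le> k" "i \<le> m" "m \<le> i + (k - t)"
      unfolding A_def B_def by auto
    then have "m - t + (k - (m - i)) = i + (k - t)" using assms by auto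
    then show "g z w (case x of (t, i) \<Rightarrow> (m - i, m - t)) = - g z w x"
      unfolding g_def using x assms by (simp add: cross_coef_antisym)
  qed (use fA assms in \<open>auto simp: A_def B_def\<close>)
  have "kernel_coef P n m k = (\<lambda>z w. \<Sum>x\<in>A \<inter> B. g z w x)"
  proof (intro ext)
    fix z w
    have "kernel_coef P n m k z w = sum (g z w) (A \<inter> B) + sum (g z w) (A - B)"
      unfolding kernel_coef_pairs A_def g_def by (rule sum.Int_Diff) simp
    then show "kernel_coef P n m k z w = (\<Sum>x\<in>A \<inter> B. g z w x)" using high_zero by simp
  qed
  moreover have "in_span_box n m (\<lambda>z w. \<Sum>x\<in>A \<inter> B. g z w x)"
  proof (rule box_sum)
    fix x assume "x \<in> A \<inter> B"
    then obtain t i where x: "x = (t,i)" "i + (k - t) < m" unfolding B_def by auto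
    show "in_span_box n m (\<lambda>z w. g z w x)" unfolding g_def x using box_cross_coef[OF x(2)] by simp
  qed (use fA in simp)
  ultimately show ?thesis by simp
qed


section \<open>Integrals over the unit circle\<close>

text \<open>Cauchy's theorem on the unit disc, in angular form: a positive power of w times a
  function holomorphic on the disc (continuous up to the boundary) has mean zero on the circle.\<close>
lemma circle_integral_positive_power:
  fixes h :: "complex \<Rightarrow> complex" and s :: nat
  assumes cont: "continuous_on (cball 0 1) h" and hol: "h holomorphic_on ball 0 1"
    and s: "1 \<le> s"
  shows "integral {-pi..pi} (\<lambda>t. cis t ^ s * h (cis t)) = 0"
proof -
  define g where "g = (\<lambda>w. w ^ (s - 1) * h w)"
  have "(g has_contour_integral 0) (part_circlepath 0 1 (-pi) pi)"
  proof (rule Cauchy_theorem_disc[where K = "{}"])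
    show "continuous_on (cball 0 1) g"
      unfolding g_def by (intro continuous_intros cont)
    have "g holomorphic_on ball 0 1"
      unfolding g_def by (intro holomorphic_intros hol)
    then show "g field_differentiable at x" if "x \<in> ball 0 1 - {}" for x
      using that by (auto intro: holomorphic_on_imp_differentiable_at)
    show "path_image (part_circlepath 0 1 (-pi) pi) \<subseteq> cball 0 1"
      using path_image_part_circlepath_subset[of "-pi" pi 1 0] by auto
    show "pathfinish (part_circlepath 0 1 (-pi) pi) = pathstart (part_circlepath 0 1 (-pi) pi)"
      by (simp add: exp_minus)
  qed auto
  then have "((\<lambda>t. g (cis t) * \<i> * cis t) has_integral 0) {-pi..pi}"
    by (simp add: has_contour_integral_part_circlepath_iff)
  then have "((\<lambda>t. g (cis t) * \<i> * cis t * (- \<i>)) has_integral 0 * (- \<i>)) {-pi..pi}"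
    by (rule has_integral_mult_left)
  moreover have "g (cis t) * \<i> * cis t * (- \<i>) = cis t ^ s * h (cis t)" for t
  proof -
    have "cis t ^ s = cis t ^ (s - 1) * cis t"
      using s by (simp add: power_Suc2[symmetric])
    then show ?thesis unfolding g_def by (simp add: mult_ac)
  qed
  ultimately show ?thesis by (simp add: integral_unique)
qed

lemma cis_power_cnj_shift:
  assumes "b \<le> a"
  shows "cis t ^ a * cnj (cis t) ^ b = cis t ^ (a - b)"
proof -
  have inv: "cnj (cis t) = inverse (cis t)" by (simp add: cis_cnj)
  have "cis t ^ a * cnj (cis t) ^ b = cis t ^ a / cis t ^ b"
    by (simp only: inv power_inverse divide_inverse)
  also have "\<dots> = cis t ^ (a - b)" using assms by (simp add: power_diff)
  finally show ?thesis .
qed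

lemma circle_monomial_integral:
  "integral {-pi..pi} (\<lambda>t. cis t ^ a * cnj (cis t) ^ b) = (if a = b then complex_of_real (2 * pi) else 0)"
proof (cases a b rule: linorder_cases)
  case equal
  have "cis t ^ a * cnj (cis t) ^ b = 1" for t
    using cis_power_cnj_shift[of b a t] equal by (simp only: order_refl diff_self_eq_0 power_0)
  moreover have "((\<lambda>t. 1::complex) has_integral complex_of_real (2 * pi)) {-pi..pi}"
    using has_integral_const_real[of "1::complex" "-pi" pi] by (simp add: scaleR_conv_of_real)
  ultimately show ?thesis using equal by (simp add: integral_unique scaleR_conv_of_real)
next
  case greater
  have "cis t ^ a * cnj (cis t) ^ b = cis t ^ (a - b) * 1" for t
    using cis_power_cnj_shift[of b a t] greater by (simp only: less_imp_le mult_1_right)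
  moreover have "integral {-pi..pi} (\<lambda>t. cis t ^ (a - b) * 1) = 0"
    by (rule circle_integral_positive_power) (use greater in auto)
  ultimately have "integral {-pi..pi} (\<lambda>t. cis t ^ a * cnj (cis t) ^ b) = 0"
    by (simp only:)
  moreover have "a \<noteq> b" using greater by simp
  ultimately show ?thesis by (simp only: if_False)
next
  case less
  have "cis t ^ a * cnj (cis t) ^ b = cnj (cis t ^ (b - a) * 1)" for t
  proof -
    have "cis t ^ a * cnj (cis t) ^ b = cnj (cis t ^ b * cnj (cis t) ^ a)"
      by (simp only: complex_cnj_mult complex_cnj_power complex_cnj_cnj mult.commute)
    then show ?thesis using less by (simp only: cis_power_cnj_shift less_imp_le mult_1_right)
  qed
  then have "integral {-pi..pi} (\<lambda>t. cis t ^ a * cnj (cis t) ^ b)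
      = cnj (integral {-pi..pi} (\<lambda>t. cis t ^ (b - a) * 1))"
    by (simp only: integral_cnj)
  moreover have "integral {-pi..pi} (\<lambda>t. cis t ^ (b - a) * 1) = 0"
    by (rule circle_integral_positive_power) (use less in auto)
  ultimately show ?thesis using less by auto
qed

lemma circle_integral_character_sum:
  assumes "finite S"
  shows "integral {-pi..pi} (\<lambda>y. \<Sum>x\<in>S. c x * (cis y ^ e x * cnj (cis y) ^ b))
    = complex_of_real (2 * pi) * (\<Sum>x\<in>{x\<in>S. e x = b}. c x)"
proof -
  have "integral {-pi..pi} (\<lambda>y. \<Sum>x\<in>S. c x * (cis y ^ e x * cnj (cis y) ^ b))
      = (\<Sum>x\<in>S. c x * integral {-pi..pi} (\<lambda>y. cis y ^ e x * cnj (cis y) ^ b))"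
    using assms by (subst integral_sum)
      (auto intro!: integrable_continuous_interval continuous_intros)
  also have "\<dots> = (\<Sum>x\<in>S. if e x = b then complex_of_real (2 * pi) * c x else 0)"
    unfolding circle_monomial_integral by (intro sum.cong refl) simp
  also have "\<dots> = complex_of_real (2 * pi) * (\<Sum>x\<in>{x\<in>S. e x = b}. c x)"
    unfolding sum.inter_filter[OF assms] sum_distrib_left by (intro sum.cong) auto
  finally show ?thesis .
qed


section \<open>(b) The reproducing property of A_k\<close>

lemma stable_disc_nonzero:
  "stable P n m \<Longrightarrow> cmod z \<le> 1 \<Longrightarrow> cmod w \<le> 1 \<Longrightarrow> peval P n m z w \<noteq> 0"
  unfolding stable_def by simp

lemma peval_torus_nonzero: "stable P n m \<Longrightarrow> peval P n m (cis x) (cis y) \<noteq> 0"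
  unfolding stable_def by simp

lemma peval_continuous_on [continuous_intros]:
  "continuous_on S f \<Longrightarrow> continuous_on S g \<Longrightarrow> continuous_on S (\<lambda>x. peval P n m (f x) (g x))"
  unfolding peval_def by (intro continuous_intros)

lemma circle_integrable:
  assumes "stable P n m" "cmod z = 1" "continuous_on {-pi..pi} g"
  shows "(\<lambda>y. g y / peval P n m z (cis y)) integrable_on {-pi..pi}"
  by (rule integrable_continuous_interval)
     (intro continuous_intros assms(3), use stable_disc_nonzero[OF assms(1)] assms(2) in auto)

definition circle_moment :: "(nat \<Rightarrow> nat \<Rightarrow> complex) \<Rightarrow> nat \<Rightarrow> nat \<Rightarrow> complex \<Rightarrow> nat \<Rightarrow> nat \<Rightarrow> complex" where
  "circle_moment P n m z a b =
     integral {-pi..pi} (\<lambda>y. cis y ^ a * cnj (cis y) ^ b / peval P n m z (cis y))"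

text \<open>Stability makes 1 / p(z,\<cdot>) holomorphic on the closed disc, so moments of positive
  degree vanish.\<close>
lemma circle_moment_vanishes:
  assumes st: "stable P n m" and z: "cmod z = 1" and ab: "b < a"
  shows "circle_moment P n m z a b = 0"
proof -
  define h where "h = (\<lambda>w. 1 / peval P n m z w)"
  have nz: "peval P n m z w \<noteq> 0" if "w \<in> cball 0 1" for w
    using stable_disc_nonzero[OF st] z that by simp
  have "continuous_on (cball 0 1) h"
    unfolding h_def using nz by (intro continuous_intros) auto
  moreover have "h holomorphic_on ball 0 1"
    unfolding h_def peval_def using nz by (intro holomorphic_intros) (auto simp: peval_def)
  ultimately have "integral {-pi..pi} (\<lambda>t. cis t ^ (a - b) * h (cis t)) = 0"
    by (rule circle_integral_positive_power) (use ab in simp)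
  moreover have "cis t ^ a * cnj (cis t) ^ b / peval P n m z (cis t) = cis t ^ (a - b) * h (cis t)" for t
    using ab by (simp add: h_def cis_power_cnj_shift[of b a t])
  ultimately show ?thesis unfolding circle_moment_def by simp
qed

lemma cis_power_cnj_shift':
  assumes "t \<le> k"
  shows "cis y ^ t * cnj (cis y) ^ k = cnj (cis y) ^ (k - t)"
proof -
  have "cis y ^ t * cnj (cis y) ^ k = cnj (cis y ^ k * cnj (cis y) ^ t)"
    by (simp only: complex_cnj_mult complex_cnj_power complex_cnj_cnj mult.commute)
  also have "\<dots> = cnj (cis y) ^ (k - t)" using assms by (simp only: cis_power_cnj_shift complex_cnj_power)
  finally show ?thesis .
qed

text \<open>The key convolution identity: since \<Sum>_t p_t(z) w^t = p(z,w), the moments are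
  inverse to the coefficients p_t(z).\<close>
lemma moment_convolution:
  assumes st: "stable P n m" and z: "cmod z = 1" and k: "k \<le> m"
  shows "(\<Sum>t\<le>k. pcoef P n t z * circle_moment P n m z j (k - t))
    = (if j = k then complex_of_real (2 * pi) else 0)"
proof -
  define N where "N t = integral {-pi..pi}
      (\<lambda>y. pcoef P n t z * cis y ^ t * (cis y ^ j * cnj (cis y) ^ k) / peval P n m z (cis y))" for t
  have low: "pcoef P n t z * circle_moment P n m z j (k - t) = N t" if "t \<le> k" for t
  proof -
    have "pcoef P n t z * circle_moment P n m z j (k - t) = integral {-pi..pi}
        (\<lambda>y. pcoef P n t z * (cis y ^ j * cnj (cis y) ^ (k - t) / peval P n m z (cis y)))"
      by (simp only: circle_moment_def integral_mult_right)
    also have "\<dots> = N t"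
      unfolding N_def cis_power_cnj_shift'[OF that, symmetric] by (intro integral_cong) (simp add: mult_ac)
    finally show ?thesis .
  qed
  have high: "N t = 0" if "k < t" for t
  proof -
    have "N t = pcoef P n t z * circle_moment P n m z (t + j) k"
      unfolding N_def circle_moment_def integral_mult_right[symmetric]
      by (intro integral_cong) (simp add: power_add mult_ac)
    then show ?thesis using circle_moment_vanishes[OF st z, of k "t + j"] that by simp
  qed
  have "(\<Sum>t\<le>k. pcoef P n t z * circle_moment P n m z j (k - t)) = (\<Sum>t\<le>m. N t)"
    using k by (simp add: low sum.mono_neutral_right[of "{..m}" "{..k}"] high)
  also have "\<dots> = integral {-pi..pi}
      (\<lambda>y. \<Sum>t\<le>m. pcoef P n t z * cis y ^ t * (cis y ^ j * cnj (cis y) ^ k) / peval P n m z (cis y))"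
    unfolding N_def
    by (rule integral_sum[symmetric]) (auto intro!: circle_integrable[OF st z] continuous_intros)
  also have "\<dots> = integral {-pi..pi} (\<lambda>y. cis y ^ j * cnj (cis y) ^ k)"
  proof (rule integral_cong)
    fix y
    have "peval P n m z (cis y) \<noteq> 0" using stable_disc_nonzero[OF st] z by simp
    then show "(\<Sum>t\<le>m. pcoef P n t z * cis y ^ t * (cis y ^ j * cnj (cis y) ^ k) / peval P n m z (cis y))
        = cis y ^ j * cnj (cis y) ^ k"
      unfolding sum_divide_distrib[symmetric] sum_distrib_right[symmetric] peval_by_w_powers[symmetric]
      by simp
  qed
  also have "\<dots> = (if j = k then complex_of_real (2 * pi) else 0)"
    by (rule circle_monomial_integral)
  finally show ?thesis .
qed

text \<open>On the unit circle conj z = 1/z, so p* and p~ are expressed through conjugates of p.\<close>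
lemma cnj_unit_circle: assumes "cmod z = 1" shows "cnj z = 1 / z"
proof -
  have "z * cnj z = 1" using complex_norm_square[of z] assms by simp
  moreover have "z \<noteq> 0" using assms by auto
  ultimately show ?thesis by (simp add: eq_divide_eq mult.commute)
qed

lemma refl_coef_on_circle: assumes "cmod z = 1" shows "refl_coef P n t z = z ^ n * cnj (pcoef P n t z)"
proof -
  have z0: "z \<noteq> 0" using assms by auto
  have "z ^ n * cnj (pcoef P n t z) = (\<Sum>l\<le>n. cnj (P l t) * (z ^ n * (1 / z) ^ l))"
    unfolding pcoef_def using cnj_unit_circle[OF assms] by (simp add: sum_distrib_left mult_ac)
  also have "\<dots> = refl_coef P n t z" unfolding refl_coef_def
    by (intro sum.cong refl) (use z0 in \<open>simp add: zpow_times_inverse_pow\<close>)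
  finally show ?thesis by simp
qed

lemma ptilde_on_torus: assumes "cmod z = 1" "cmod w = 1"
  shows "ptilde P n m z w = z ^ n * w ^ m * cnj (peval P n m z w)"
proof -
  have z0: "z \<noteq> 0" and w0: "w \<noteq> 0" using assms by auto
  have "z ^ n * w ^ m * cnj (peval P n m z w)
      = (\<Sum>i\<le>n. \<Sum>j\<le>m. cnj (P i j) * (z ^ n * (1 / z) ^ i) * (w ^ m * (1 / w) ^ j))"
    unfolding peval_def using cnj_unit_circle[OF assms(1)] cnj_unit_circle[OF assms(2)]
    by (simp add: sum_distrib_left mult_ac)
  also have "\<dots> = ptilde P n m z w" unfolding ptilde_def
    by (intro sum.cong refl) (use z0 w0 in \<open>simp add: zpow_times_inverse_pow\<close>)
  finally show ?thesis by simp
qed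

lemma weighted_kernel_coef_split:
  assumes "cmod z = 1" "cmod w = 1" "peval P n m z w \<noteq> 0"
  shows "kernel_coef P n m k z w * cnj (z ^ i * w ^ j) / of_real ((cmod (peval P n m z w))^2)
    = (\<Sum>t\<le>k. z ^ n * cnj z ^ i * (cnj (pcoef P n t z) * (w ^ (k - t) * cnj w ^ j / cnj (peval P n m z w))
          - pcoef P n (m - t) z * (w ^ m * w ^ (k - t) * cnj w ^ j / peval P n m z w)))"
proof -
  define Q where "Q = peval P n m z w"
  have Q0: "Q \<noteq> 0" "cnj Q \<noteq> 0" using assms(3) unfolding Q_def by auto
  have split: "W * (Q * (Z * A) - Z * M * R * B) * (D * E) / (Q * R)
      = Z * D * (A * (W * E / R) - B * (M * W * E / Q))" if "R \<noteq> 0" for W Z A M R B D E :: complex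
    using Q0 that by (simp add: field_simps)
  have "of_real ((cmod Q)^2) = Q * cnj Q" using complex_norm_square[of Q] by simp
  then have "kernel_coef P n m k z w * cnj (z ^ i * w ^ j) / of_real ((cmod Q)^2)
      = (\<Sum>t\<le>k. w ^ (k - t) * numer_coef P n m t z w * (cnj z ^ i * cnj w ^ j) / (Q * cnj Q))"
    unfolding kernel_coef_def sum_distrib_right sum_divide_distrib by simp
  also have "\<dots> = (\<Sum>t\<le>k. z ^ n * cnj z ^ i * (cnj (pcoef P n t z) * (w ^ (k - t) * cnj w ^ j / cnj Q)
          - pcoef P n (m - t) z * (w ^ m * w ^ (k - t) * cnj w ^ j / Q)))"
    unfolding numer_coef_alt refl_coef_on_circle[OF assms(1)] ptilde_on_torus[OF assms(1,2)] Q_def[symmetric]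
    using Q0 by (intro sum.cong refl split)
  finally show ?thesis unfolding Q_def .
qed

text \<open>Integrating in w: only the conj p terms survive, and they reduce to the convolution.\<close>
lemma kernel_coef_inner_integral:
  assumes st: "stable P n m" and z: "cmod z = 1" and j: "j < m" and k: "k < m"
  shows "integral {-pi..pi} (\<lambda>y. kernel_coef P n m k z (cis y) * cnj (z ^ i * cis y ^ j)
      / of_real ((cmod (peval P n m z (cis y)))^2))
     = z ^ n * cnj z ^ i * (if j = k then complex_of_real (2 * pi) else 0)"
proof -
  define zc where "zc = z ^ n * cnj z ^ i"
  define A where "A t y = cnj (pcoef P n t z) * (cis y ^ (k - t) * cnj (cis y) ^ j / cnj (peval P n m z (cis y)))" for t y
  define B where "B t y = pcoef P n (m - t) z * (cis y ^ m * cis y ^ (k - t) * cnj (cis y) ^ j / peval P n m z (cis y))" for t y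
  have A_cnj: "A t = (\<lambda>y. cnj (pcoef P n t z * (cis y ^ j * cnj (cis y) ^ (k - t) / peval P n m z (cis y))))" for t
    unfolding A_def by (simp add: mult.commute)
  have iA: "A t integrable_on {-pi..pi}" for t
    unfolding A_cnj integrable_on_cnj_iff
    by (intro integrable_on_mult_right circle_integrable[OF st z] continuous_intros)
  have iB: "B t integrable_on {-pi..pi}" for t
    unfolding B_def by (intro integrable_on_mult_right circle_integrable[OF st z] continuous_intros)
  have IA: "integral {-pi..pi} (A t) = cnj (pcoef P n t z * circle_moment P n m z j (k - t))" for t
    unfolding A_cnj circle_moment_def integral_cnj[symmetric] integral_mult_right ..
  have IB: "integral {-pi..pi} (B t) = 0" for t
    unfolding B_def integral_mult_right power_add[symmetric] circle_moment_def[symmetric]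
    using circle_moment_vanishes[OF st z, of j "m + (k - t)"] j by simp
  have "integral {-pi..pi} (\<lambda>y. kernel_coef P n m k z (cis y) * cnj (z ^ i * cis y ^ j)
      / of_real ((cmod (peval P n m z (cis y)))^2))
      = integral {-pi..pi} (\<lambda>y. \<Sum>t\<le>k. zc * A t y - zc * B t y)"
  proof (rule integral_cong)
    fix y
    have "peval P n m z (cis y) \<noteq> 0" using stable_disc_nonzero[OF st] z by simp
    from weighted_kernel_coef_split[OF z norm_cis this]
    show "kernel_coef P n m k z (cis y) * cnj (z ^ i * cis y ^ j) / of_real ((cmod (peval P n m z (cis y)))^2)
        = (\<Sum>t\<le>k. zc * A t y - zc * B t y)"
      unfolding A_def B_def zc_def by (simp only: right_diff_distrib)
  qed
  also have "\<dots> = (\<Sum>t\<le>k. integral {-pi..pi} (\<lambda>y. zc * A t y - zc * B t y))"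
    by (rule integral_sum) (auto intro!: integrable_diff integrable_on_mult_right iA iB)
  also have "\<dots> = (\<Sum>t\<le>k. zc * integral {-pi..pi} (A t) - zc * integral {-pi..pi} (B t))"
    by (intro sum.cong refl) (simp only: integral_diff integrable_on_mult_right iA iB integral_mult_right)
  also have "\<dots> = zc * cnj (\<Sum>t\<le>k. pcoef P n t z * circle_moment P n m z j (k - t))"
    by (simp add: IA IB sum_distrib_left)
  also have "\<dots> = zc * (if j = k then complex_of_real (2 * pi) else 0)"
    using k by (simp add: moment_convolution[OF st z])
  finally show ?thesis unfolding zc_def .
qed


section \<open>The weighted inner product on the torus\<close>

text \<open>Joint continuity on C^2 guarantees integrability against the weight on the torus.\<close>
definition bicont :: "(complex \<Rightarrow> complex \<Rightarrow> complex) \<Rightarrow> bool" where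
  "bicont f \<longleftrightarrow> continuous_on UNIV (\<lambda>x. f (fst x) (snd x))"

lemma bicont_torus: "bicont f \<Longrightarrow> continuous_on S (\<lambda>x::real\<times>real. f (cis (fst x)) (cis (snd x)))"
  unfolding bicont_def
  by (rule continuous_on_compose2[of UNIV "\<lambda>x. f (fst x) (snd x)" S "\<lambda>x. (cis (fst x), cis (snd x))",
        simplified]) (auto intro!: continuous_intros)

lemma bicont_box: "in_span_box n m f \<Longrightarrow> bicont f"
  unfolding in_span_box_def bicont_def by (elim exE) (simp add: continuous_intros)

lemma bicont_monom: "bicont (monom2 i j)"
  unfolding bicont_def monom2_def by (intro continuous_intros)

lemma bicont_kernel_coef: "bicont (kernel_coef P n m k)"
  unfolding bicont_def kernel_coef_def numer_coef_def cross_coef_def pcoef_def refl_coef_def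
  by (intro continuous_intros)

definition wint :: "(nat \<Rightarrow> nat \<Rightarrow> complex) \<Rightarrow> nat \<Rightarrow> nat \<Rightarrow> (complex \<Rightarrow> complex \<Rightarrow> complex)
    \<Rightarrow> (complex \<Rightarrow> complex \<Rightarrow> complex) \<Rightarrow> real \<times> real \<Rightarrow> complex" where
  "wint P n m f g = (\<lambda>x. f (cis (fst x)) (cis (snd x)) * cnj (g (cis (fst x)) (cis (snd x)))
          / of_real ((cmod (peval P n m (cis (fst x)) (cis (snd x)))) ^ 2))"

lemma wip_wint: "wip P n m f g = integral (cbox (-pi, -pi) (pi, pi)) (wint P n m f g) / of_real (4 * pi ^ 2)"
  unfolding wip_def wint_def ..

lemma wint_continuous: "stable P n m \<Longrightarrow> bicont f \<Longrightarrow> bicont g \<Longrightarrow> continuous_on S (wint P n m f g)"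
  unfolding wint_def
  by (intro continuous_intros bicont_torus continuous_on_norm) (auto simp: peval_torus_nonzero)

lemma wint_integrable:
  "stable P n m \<Longrightarrow> bicont f \<Longrightarrow> bicont g \<Longrightarrow> wint P n m f g integrable_on cbox (-pi, -pi) (pi, pi)"
  by (rule integrable_continuous) (rule wint_continuous)

lemma fubini_torus:
  fixes h :: "real \<times> real \<Rightarrow> complex"
  shows "continuous_on (cbox (-pi, -pi) (pi, pi)) h \<Longrightarrow>
    integral (cbox (-pi, -pi) (pi, pi)) h = integral {-pi..pi} (\<lambda>x. integral {-pi..pi} (\<lambda>y. h (x, y)))"
  using integral_prod_continuous[of "-pi" "-pi" pi pi h] by simp

lemma wip_kernel_coef_monom:
  assumes st: "stable P n m" and j: "j < m" and k: "k < m"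
  shows "wip P n m (kernel_coef P n m k) (monom2 i j) = (if i = n \<and> j = k then 1 else 0)"
proof -
  have "integral (cbox (-pi, -pi) (pi, pi)) (wint P n m (kernel_coef P n m k) (monom2 i j))
     = integral {-pi..pi} (\<lambda>x. integral {-pi..pi} (\<lambda>y. wint P n m (kernel_coef P n m k) (monom2 i j) (x, y)))"
    by (intro fubini_torus wint_continuous st bicont_kernel_coef bicont_monom)
  also have "\<dots> = integral {-pi..pi} (\<lambda>x. (if j = k then complex_of_real (2 * pi) else 0) * (cis x ^ n * cnj (cis x) ^ i))"
    unfolding wint_def monom2_def fst_conv snd_conv kernel_coef_inner_integral[OF st norm_cis j k]
    by (simp add: mult_ac)
  also have "\<dots> = (if j = k then complex_of_real (2 * pi) else 0) * (if n = i then complex_of_real (2 * pi) else 0)"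
    unfolding integral_mult_right circle_monomial_integral ..
  finally show ?thesis unfolding wip_wint by (auto simp: power2_eq_square)
qed

lemma wip_expand_right:
  assumes st: "stable P n m" and f: "bicont f"
    and g: "\<And>z w. g z w = (\<Sum>i\<le>2*n. \<Sum>j<m. G i j * z ^ i * w ^ j)"
  shows "wip P n m f g = (\<Sum>i\<le>2*n. \<Sum>j<m. cnj (G i j) * wip P n m f (monom2 i j))"
proof -
  have pw: "wint P n m f g x = (\<Sum>i\<le>2*n. \<Sum>j<m. cnj (G i j) * wint P n m f (monom2 i j) x)" for x
    unfolding wint_def g monom2_def
    by (simp add: sum_distrib_left sum_distrib_right sum_divide_distrib mult_ac)
  have int: "(\<lambda>x. cnj (G i j) * wint P n m f (monom2 i j) x) integrable_on cbox (-pi, -pi) (pi, pi)" for i j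
    by (intro integrable_on_mult_right wint_integrable st f bicont_monom)
  have "integral (cbox (-pi, -pi) (pi, pi)) (wint P n m f g)
      = (\<Sum>i\<le>2*n. \<Sum>j<m. cnj (G i j) * integral (cbox (-pi, -pi) (pi, pi)) (wint P n m f (monom2 i j)))"
    unfolding pw by (subst integral_sum) (auto intro!: integrable_sum int simp: integral_sum int)
  then show ?thesis unfolding wip_wint by (simp add: sum_divide_distrib)
qed

lemma wip_diff_left:
  assumes st: "stable P n m" and f: "bicont f" and a: "bicont a" and h: "bicont h"
  shows "wip P n m (\<lambda>z w. f z w - c * a z w) h = wip P n m f h - c * wip P n m a h"
proof -
  have pw: "wint P n m (\<lambda>z w. f z w - c * a z w) h x = wint P n m f h x - c * wint P n m a h x" for x
    unfolding wint_def by (simp add: algebra_simps diff_divide_distrib)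
  show ?thesis unfolding wip_wint pw
    by (subst integral_diff) (auto intro!: integrable_on_mult_right wint_integrable st f a h
        simp: diff_divide_distrib)
qed

lemma wip_scale: "wip P n m (\<lambda>z w. c * a z w) (\<lambda>z w. c * a z w) = c * cnj c * wip P n m a a"
proof -
  have pw: "wint P n m (\<lambda>z w. c * a z w) (\<lambda>z w. c * a z w) x = (c * cnj c) * wint P n m a a x" for x
    unfolding wint_def by (simp add: mult_ac)
  show ?thesis unfolding wip_wint pw integral_mult_right by simp
qed

lemma wip_self_real: "cnj (wip P n m f f) = wip P n m f f"
proof -
  have "cnj (wint P n m f f x) = wint P n m f f x" for x
    unfolding wint_def by (simp add: mult.commute)
  then show ?thesis unfolding wip_wint by (simp add: integral_cnj)
qed

lemma wip_self_zero:
  assumes st: "stable P n m" and g: "bicont g" and z: "wip P n m g g = 0"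
    and x: "x \<in> cbox (-pi, -pi) (pi, pi)"
  shows "g (cis (fst x)) (cis (snd x)) = 0"
proof -
  define H where "H = (\<lambda>x::real\<times>real. (cmod (g (cis (fst x)) (cis (snd x))))^2
      / (cmod (peval P n m (cis (fst x)) (cis (snd x))))^2)"
  have wH: "wint P n m g g x = of_real (H x)" for x
    unfolding wint_def H_def using complex_norm_square[of "g (cis (fst x)) (cis (snd x))"] by simp
  have cH: "continuous_on (cbox (-pi, -pi) (pi, pi)) H"
    unfolding H_def
    by (intro continuous_intros bicont_torus g continuous_on_norm) (auto simp: peval_torus_nonzero[OF st])
  have Hi: "(H has_integral integral (cbox (-pi, -pi) (pi, pi)) H) (cbox (-pi, -pi) (pi, pi))"
    using integrable_continuous[OF cH] by (simp add: integrable_integral)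
  have "integral (cbox (-pi, -pi) (pi, pi)) (wint P n m g g) = of_real (integral (cbox (-pi, -pi) (pi, pi)) H)"
    using has_integral_of_real[OF Hi] unfolding wH by (rule integral_unique)
  moreover have "integral (cbox (-pi, -pi) (pi, pi)) (wint P n m g g) = 0"
    using z unfolding wip_wint by simp
  ultimately have "(H has_integral 0) (cbox (-pi, -pi) (pi, pi))" using Hi by simp
  moreover have "box (-pi, -pi) (pi, pi) \<noteq> {}"
    by (auto simp: box_ne_empty Basis_prod_def)
  ultimately have "H x = 0"
    by (intro has_integral_0_cbox_imp_0[OF cH _ _ _ x]) (auto simp: H_def)
  then show ?thesis unfolding H_def using peval_torus_nonzero[OF st] by simp
qed


section \<open>Fourier coefficients of box polynomials\<close>

lemma box_fourier_coeff:
  assumes g: "\<And>z w. g z w = (\<Sum>i\<le>2*n. \<Sum>j<m. C i j * z ^ i * w ^ j)" and a: "a \<le> 2*n" and b: "b < m"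
  shows "integral (cbox (-pi, -pi) (pi, pi)) (\<lambda>x. g (cis (fst x)) (cis (snd x)) * cnj (cis (fst x) ^ a * cis (snd x) ^ b))
     = of_real (4 * pi ^ 2) * C a b"
proof -
  have inner: "integral {-pi..pi} (\<lambda>y. g (cis x) (cis y) * cnj (cis x ^ a * cis y ^ b))
      = complex_of_real (2 * pi) * (\<Sum>i\<le>2*n. C i b * (cis x ^ i * cnj (cis x) ^ a))" for x
  proof -
    have "integral {-pi..pi} (\<lambda>y. g (cis x) (cis y) * cnj (cis x ^ a * cis y ^ b))
        = integral {-pi..pi} (\<lambda>y. \<Sum>j<m. (\<Sum>i\<le>2*n. C i j * (cis x ^ i * cnj (cis x) ^ a))
            * (cis y ^ j * cnj (cis y) ^ b))"
    proof (rule integral_cong)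
      fix y
      have "g (cis x) (cis y) * cnj (cis x ^ a * cis y ^ b)
          = (\<Sum>i\<le>2*n. \<Sum>j<m. (C i j * (cis x ^ i * cnj (cis x) ^ a)) * (cis y ^ j * cnj (cis y) ^ b))"
        by (simp add: g sum_distrib_left sum_distrib_right mult_ac)
      also have "\<dots> = (\<Sum>j<m. (\<Sum>i\<le>2*n. C i j * (cis x ^ i * cnj (cis x) ^ a))
            * (cis y ^ j * cnj (cis y) ^ b))"
        by (subst sum.swap) (simp only: sum_distrib_right)
      finally show "g (cis x) (cis y) * cnj (cis x ^ a * cis y ^ b) = (\<Sum>j<m. (\<Sum>i\<le>2*n. C i j * (cis x ^ i * cnj (cis x) ^ a))
            * (cis y ^ j * cnj (cis y) ^ b))" .
    qed
    also have "\<dots> = complex_of_real (2 * pi) * (\<Sum>i\<le>2*n. C i b * (cis x ^ i * cnj (cis x) ^ a))"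
    proof -
      have "{j. j = b \<and> j < m} = {b}" using b by auto
      then show ?thesis by (simp add: circle_integral_character_sum[where e=id, simplified])
    qed
    finally show ?thesis .
  qed
  have "integral (cbox (-pi, -pi) (pi, pi)) (\<lambda>x. g (cis (fst x)) (cis (snd x)) * cnj (cis (fst x) ^ a * cis (snd x) ^ b))
      = integral {-pi..pi} (\<lambda>x. integral {-pi..pi} (\<lambda>y. g (cis x) (cis y) * cnj (cis x ^ a * cis y ^ b)))"
    by (subst fubini_torus) (auto simp: g intro!: continuous_intros)
  also have "\<dots> = integral {-pi..pi} (\<lambda>x. complex_of_real (2 * pi) * (\<Sum>i\<le>2*n. C i b * (cis x ^ i * cnj (cis x) ^ a)))"
    by (simp only: inner)
  also have "\<dots> = of_real (4 * pi ^ 2) * C a b"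
  proof -
    have "{i. i = a \<and> i \<le> 2 * n} = {a}" using a by auto
    then show ?thesis by (simp add: circle_integral_character_sum[where e=id, simplified] power2_eq_square)
  qed
  finally show ?thesis .
qed

lemma box_coeffs_zero:
  assumes g: "\<And>z w. g z w = (\<Sum>i\<le>2*n. \<Sum>j<m. C i j * z ^ i * w ^ j)" and a: "a \<le> 2*n" and b: "b < m"
    and z: "\<And>x. x \<in> cbox (-pi, -pi) (pi, pi) \<Longrightarrow> g (cis (fst x)) (cis (snd x)) = 0"
  shows "C a b = 0"
proof -
  have "of_real (4 * pi ^ 2) * C a b
      = integral (cbox (-pi, -pi) (pi, pi)) (\<lambda>x. g (cis (fst x)) (cis (snd x)) * cnj (cis (fst x) ^ a * cis (snd x) ^ b))"
    by (rule box_fourier_coeff[OF g a b, symmetric])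
  also have "\<dots> = 0" by (simp add: z integral_cong[of _ _ "\<lambda>x. 0"])
  finally show ?thesis by simp
qed


section \<open>(c) The norm of A_k\<close>

text \<open>p*_t(z) = z^n pbar_t(1/z), relating the reflected coefficients to the entries of T_m.\<close>
lemma refl_coef_pbar: "z \<noteq> 0 \<Longrightarrow> refl_coef P n t z = z ^ n * pbar P n t (1 / z)"
  unfolding refl_coef_def pbar_def sum_distrib_left
  by (intro sum.cong refl) (simp add: zpow_times_inverse_pow mult_ac)

lemma cross_coef_diagonal: assumes z: "z \<noteq> 0" and k: "k < m"
  shows "(\<Sum>t\<le>k. cross_coef P n m t t z) = z ^ n * Tent P n m z k k"
proof -
  define f where "f u = pcoef P n u z * pbar P n u (1 / z) - pbar P n (m - u) (1 / z) * pcoef P n (m - u) z" for u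
  have "Tent P n m z k k = (\<Sum>s\<le>k. (if s \<le> k then pcoef P n (k - s) z else 0) * (if s \<le> k then pbar P n (k - s) (1 / z) else 0)
    - (if s \<le> k then pbar P n (m - k + s) (1 / z) else 0) * (if s \<le> k then pcoef P n (m - k + s) z else 0))"
    unfolding Tent_def by (rule sum.mono_neutral_right) (use k in auto)
  also have "\<dots> = (\<Sum>s\<le>k. f (k - s))"
    by (intro sum.cong refl) (use k in \<open>auto simp: f_def\<close>)
  also have "\<dots> = (\<Sum>s\<le>k. f s)" by (rule sum_rev_atMost)
  finally have T: "Tent P n m z k k = (\<Sum>s\<le>k. f s)" .
  show ?thesis unfolding T sum_distrib_left cross_coef_def f_def refl_coef_pbar[OF z]
    by (intro sum.cong refl) (simp add: algebra_simps)
qed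

text \<open>The (n,k) Fourier coefficient of A_k is the mean of T_kk over the circle: integrating
  in w keeps the diagonal cross terms, and z^n conj(z)^n = 1 on the circle.\<close>
lemma kernel_coef_fourier_coeff:
  assumes k: "k < m"
  shows "integral (cbox (-pi, -pi) (pi, pi))
      (\<lambda>x. kernel_coef P n m k (cis (fst x)) (cis (snd x)) * cnj (cis (fst x) ^ n * cis (snd x) ^ k))
     = of_real (2 * pi) * integral {-pi..pi} (\<lambda>\<theta>. Tent P n m (cis \<theta>) k k)"
proof -
  define S where "S = {..k} \<times> {..m}"
  define e where "e = (\<lambda>(t, i). i + (k - t))"
  have diag: "{x \<in> S. e x = k} = (\<lambda>t. (t, t)) ` {..k}"
    using k by (auto simp: S_def e_def image_iff)
  have inner: "integral {-pi..pi} (\<lambda>y. kernel_coef P n m k (cis x) (cis y) * cnj (cis x ^ n * cis y ^ k))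
      = of_real (2 * pi) * Tent P n m (cis x) k k" for x
  proof -
    define c where "c = (\<lambda>(t, i). cross_coef P n m i t (cis x) * cnj (cis x) ^ n)"
    have "integral {-pi..pi} (\<lambda>y. kernel_coef P n m k (cis x) (cis y) * cnj (cis x ^ n * cis y ^ k))
        = integral {-pi..pi} (\<lambda>y. \<Sum>p\<in>S. c p * (cis y ^ e p * cnj (cis y) ^ k))"
      unfolding kernel_coef_pairs sum_distrib_right S_def c_def e_def
      by (intro integral_cong sum.cong refl) (auto simp: mult_ac)
    also have "\<dots> = of_real (2 * pi) * (\<Sum>p\<in>{p\<in>S. e p = k}. c p)"
      by (rule circle_integral_character_sum) (simp add: S_def)
    also have "\<dots> = of_real (2 * pi) * ((\<Sum>t\<le>k. cross_coef P n m t t (cis x)) * cnj (cis x) ^ n)"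
      unfolding diag by (subst sum.reindex) (auto simp: inj_on_def c_def sum_distrib_right)
    also have "\<dots> = of_real (2 * pi) * (Tent P n m (cis x) k k * (cis x ^ n * cnj (cis x) ^ n))"
      by (simp only: cross_coef_diagonal[OF cis_neq_zero k] mult_ac)
    also have "\<dots> = of_real (2 * pi) * Tent P n m (cis x) k k"
      by (simp only: cis_power_cnj_shift order_refl diff_self_eq_0 power_0 mult_1_right)
    finally show ?thesis .
  qed
  have "integral (cbox (-pi, -pi) (pi, pi))
      (\<lambda>x. kernel_coef P n m k (cis (fst x)) (cis (snd x)) * cnj (cis (fst x) ^ n * cis (snd x) ^ k))
    = integral {-pi..pi} (\<lambda>x. integral {-pi..pi} (\<lambda>y. kernel_coef P n m k (cis x) (cis y) * cnj (cis x ^ n * cis y ^ k)))"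
    by (subst fubini_torus) (auto intro!: continuous_intros bicont_torus[OF bicont_kernel_coef])
  also have "\<dots> = of_real (2 * pi) * integral {-pi..pi} (\<lambda>\<theta>. Tent P n m (cis \<theta>) k k)"
    by (simp only: inner integral_mult_right)
  finally show ?thesis .
qed


section \<open>Reproducing vectors of the weighted box space\<close>

lemma wip_vanishing_left:
  assumes "\<And>x. x \<in> cbox (-pi, -pi) (pi, pi) \<Longrightarrow> g (cis (fst x)) (cis (snd x)) = 0"
  shows "wip P n m g h = 0"
proof -
  have "integral (cbox (-pi, -pi) (pi, pi)) (wint P n m g h) = integral (cbox (-pi, -pi) (pi, pi)) (\<lambda>x. 0)"
    by (rule integral_cong) (simp add: wint_def assms)
  then show ?thesis unfolding wip_wint by simp
qed

lemma box_orthogonal_zero: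
  assumes st: "stable P n m" and g: "\<And>z w. g z w = (\<Sum>i\<le>2*n. \<Sum>j<m. G i j * z ^ i * w ^ j)"
    and orth: "\<And>i j. i \<le> 2*n \<Longrightarrow> j < m \<Longrightarrow> wip P n m g (monom2 i j) = 0"
  shows "g = (\<lambda>z w. 0)"
proof -
  have box: "in_span_box n m g" unfolding in_span_box_def using g by blast
  have "wip P n m g g = 0"
    unfolding wip_expand_right[OF st bicont_box[OF box] g] by (simp add: orth)
  then have "g (cis (fst x)) (cis (snd x)) = 0" if "x \<in> cbox (-pi, -pi) (pi, pi)" for x
    using wip_self_zero[OF st bicont_box[OF box] _ that] by simp
  then have "G i j = 0" if "i \<le> 2*n" "j < m" for i j
    by (rule box_coeffs_zero[OF g that])
  then show ?thesis by (intro ext) (simp add: g)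
qed

lemma reproducing_norm:
  assumes st: "stable P n m" and A: "\<And>z w. A z w = (\<Sum>i\<le>2*n. \<Sum>j<m. C i j * z ^ i * w ^ j)"
    and repr: "\<And>i j. i \<le> 2*n \<Longrightarrow> j < m \<Longrightarrow> wip P n m A (monom2 i j) = (if i = i0 \<and> j = j0 then 1 else 0)"
    and i0: "i0 \<le> 2*n" and j0: "j0 < m"
  shows "wip P n m A A = C i0 j0"
proof -
  have box: "in_span_box n m A" unfolding in_span_box_def using A by blast
  have "wip P n m A A = (\<Sum>i\<le>2*n. \<Sum>j<m. cnj (C i j) * wip P n m A (monom2 i j))"
    by (rule wip_expand_right[OF st bicont_box[OF box] A])
  also have "\<dots> = (\<Sum>i\<le>2*n. \<Sum>j<m. if i = i0 \<and> j = j0 then cnj (C i j) else 0)"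
    by (intro sum.cong refl) (simp add: repr)
  also have "\<dots> = (\<Sum>i\<le>2*n. if i = i0 then cnj (C i j0) else 0)"
    using j0 by (intro sum.cong refl) (simp add: sum.delta)
  also have "\<dots> = cnj (C i0 j0)" using i0 by simp
  finally have "cnj (wip P n m A A) = C i0 j0" by simp
  then show ?thesis by (simp add: wip_self_real)
qed

lemma reproducing_unique:
  assumes st: "stable P n m" and boxA: "in_span_box n m A"
    and repr: "\<And>i j. i \<le> 2*n \<Longrightarrow> j < m \<Longrightarrow> wip P n m A (monom2 i j) = (if i = i0 \<and> j = j0 then 1 else 0)"
    and i0: "i0 \<le> 2*n" and j0: "j0 < m"
    and boxf: "in_span_box n m f"
    and orth: "\<And>i j. i \<le> 2*n \<Longrightarrow> j < m \<Longrightarrow> (i, j) \<noteq> (i0, j0) \<Longrightarrow> wip P n m f (monom2 i j) = 0"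
    and norm: "wip P n m f f = wip P n m A A"
  shows "\<exists>c. cmod c = 1 \<and> f = (\<lambda>z w. c * A z w)"
proof -
  define \<gamma> where "\<gamma> = wip P n m f (monom2 i0 j0)"
  obtain C where C: "\<And>z w. A z w = (\<Sum>i\<le>2*n. \<Sum>j<m. C i j * z ^ i * w ^ j)"
    using boxA unfolding in_span_box_def by blast
  obtain D where D: "\<And>z w. f z w = (\<Sum>i\<le>2*n. \<Sum>j<m. D i j * z ^ i * w ^ j)"
    using boxf unfolding in_span_box_def by blast
  have "(\<lambda>z w. f z w - \<gamma> * A z w) = (\<lambda>z w. 0)"
  proof (rule box_orthogonal_zero[OF st])
    show "f z w - \<gamma> * A z w = (\<Sum>i\<le>2*n. \<Sum>j<m. (D i j - \<gamma> * C i j) * z ^ i * w ^ j)" for z w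
      unfolding C D by (simp add: sum_subtractf sum_distrib_left left_diff_distrib mult.assoc)
    show "wip P n m (\<lambda>z w. f z w - \<gamma> * A z w) (monom2 i j) = 0" if "i \<le> 2*n" "j < m" for i j
      unfolding wip_diff_left[OF st bicont_box[OF boxf] bicont_box[OF boxA] bicont_monom]
      using that orth[of i j] repr[of i j] by (cases "i = i0 \<and> j = j0") (auto simp: \<gamma>_def)
  qed
  then have "f z w - \<gamma> * A z w = 0" for z w by (simp add: fun_eq_iff)
  then have f: "f = (\<lambda>z w. \<gamma> * A z w)" by (intro ext) simp
  have "wip P n m A A \<noteq> 0"
  proof
    assume A0: "wip P n m A A = 0"
    have "wip P n m A (monom2 i0 j0) = 0"
      by (rule wip_vanishing_left) (erule wip_self_zero[OF st bicont_box[OF boxA] A0])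
    then show False using repr[OF i0 j0] by simp
  qed
  moreover have "\<gamma> * cnj \<gamma> * wip P n m A A = wip P n m A A"
    using norm unfolding f wip_scale .
  ultimately have "\<gamma> * cnj \<gamma> = 1" by (simp only: mult_cancel_right2 simp_thms)
  then have "complex_of_real ((cmod \<gamma>)^2) = 1" using complex_norm_square[of \<gamma>] by simp
  then have "(cmod \<gamma>)^2 = 1" by (simp only: of_real_eq_1_iff)
  then have "cmod \<gamma> = 1" using norm_ge_zero[of \<gamma>] by (simp add: power2_eq_1_iff)
  then show ?thesis using f by blast
qed

text \<open>Part (c), via the reproducing property and the Fourier coefficient of A_k.\<close>
lemma kernel_coef_norm:
  assumes st: "stable P n m" and k: "k < m"
  shows "wip P n m (kernel_coef P n m k) (kernel_coef P n m k)
    = integral {-pi..pi} (\<lambda>\<theta>. Tent P n m (cis \<theta>) k k) / of_real (2 * pi)"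
proof -
  obtain C where C: "\<And>z w. kernel_coef P n m k z w = (\<Sum>i\<le>2*n. \<Sum>j<m. C i j * z ^ i * w ^ j)"
    using kernel_coef_in_box[OF k] unfolding in_span_box_def by blast
  have "wip P n m (kernel_coef P n m k) (kernel_coef P n m k) = C n k"
    by (rule reproducing_norm[OF st C wip_kernel_coef_monom[OF st _ k]]) (use k in auto)
  moreover have "complex_of_real (2 * pi) * C n k = integral {-pi..pi} (\<lambda>\<theta>. Tent P n m (cis \<theta>) k k)"
  proof -
    have "of_real (4 * pi ^ 2) * C n k = of_real (2 * pi) * integral {-pi..pi} (\<lambda>\<theta>. Tent P n m (cis \<theta>) k k)"
      using box_fourier_coeff[OF C _ k, of n] kernel_coef_fourier_coeff[OF k] by simp
    then have "complex_of_real (2 * pi) * (complex_of_real (2 * pi) * C n k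
        - integral {-pi..pi} (\<lambda>\<theta>. Tent P n m (cis \<theta>) k k)) = 0"
      by (simp add: power2_eq_square algebra_simps)
    then show ?thesis by simp
  qed
  ultimately show ?thesis by (simp add: eq_divide_eq mult.commute)
qed


theorem mainTheorem4:
  fixes P :: "nat \<Rightarrow> nat \<Rightarrow> complex" and n m k :: nat
    and a :: "nat \<Rightarrow> complex \<Rightarrow> complex \<Rightarrow> complex"
  assumes "1 \<le> n" and "1 \<le> m"
    and "has_bidegree P n m" and "stable P n m"
    and "k \<le> m - 1"
    and a_poly: "\<And>j. j < m \<Longrightarrow> is_bipoly (a j)"
    and a_def: "\<And>z w \<eta>. z \<noteq> 0 \<Longrightarrow> w * cnj \<eta> \<noteq> 1 \<Longrightarrow>
                   Lker P n m z w \<eta> = (\<Sum>j<m. a j z w * cnj \<eta> ^ j)"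
  shows "in_span_box n m (a k)
    \<and> (\<forall>i j. i \<le> 2*n \<longrightarrow> j < m \<longrightarrow> j \<noteq> k \<longrightarrow> wip P n m (a k) (monom2 i j) = 0)
    \<and> (\<forall>i. i \<le> 2*n \<longrightarrow> i \<noteq> n \<longrightarrow> wip P n m (a k) (monom2 i k) = 0)
    \<and> wip P n m (a k) (a k) = integral {-pi..pi} (\<lambda>\<theta>. Tent P n m (cis \<theta>) k k) / of_real (2 * pi)
    \<and> (\<forall>f. in_span_box n m f
          \<and> (\<forall>i j. i \<le> 2*n \<longrightarrow> j < m \<longrightarrow> j \<noteq> k \<longrightarrow> wip P n m f (monom2 i j) = 0)
          \<and> (\<forall>i. i \<le> 2*n \<longrightarrow> i \<noteq> n \<longrightarrow> wip P n m f (monom2 i k) = 0)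
          \<and> wip P n m f f = integral {-pi..pi} (\<lambda>\<theta>. Tent P n m (cis \<theta>) k k) / of_real (2 * pi)
        \<longrightarrow> (\<exists>c. cmod c = 1 \<and> f = (\<lambda>z w. c * a k z w)))"
proof -
  have k: "k < m" using assms(2,5) by arith
  note st = assms(4)
  have ak: "a k = kernel_coef P n m k" by (rule coeffs_are_kernel_coef[OF assms(2) a_poly a_def k])
  have box: "in_span_box n m (a k)" unfolding ak by (rule kernel_coef_in_box[OF k])
  have repr: "wip P n m (a k) (monom2 i j) = (if i = n \<and> j = k then 1 else 0)" if "j < m" for i j
    unfolding ak by (rule wip_kernel_coef_monom[OF st that k])
  have norm: "wip P n m (a k) (a k) = integral {-pi..pi} (\<lambda>\<theta>. Tent P n m (cis \<theta>) k k) / of_real (2 * pi)"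
    unfolding ak by (rule kernel_coef_norm[OF st k])
  have unique: "\<exists>c. cmod c = 1 \<and> f = (\<lambda>z w. c * a k z w)"
    if "in_span_box n m f"
      and "\<forall>i j. i \<le> 2*n \<longrightarrow> j < m \<longrightarrow> j \<noteq> k \<longrightarrow> wip P n m f (monom2 i j) = 0"
      and "\<forall>i. i \<le> 2*n \<longrightarrow> i \<noteq> n \<longrightarrow> wip P n m f (monom2 i k) = 0"
      and "wip P n m f f = integral {-pi..pi} (\<lambda>\<theta>. Tent P n m (cis \<theta>) k k) / of_real (2 * pi)" for f
    by (rule reproducing_unique[OF st box repr _ k that(1)]) (use that norm in auto)
  show ?thesis using box repr[OF k] repr norm unique by auto
qed

end
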